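(* Let $K_1,K_2$ be infinite compact Hausdorff spaces. Then $C(K_1\times K_2)$ fails the ball fixed point property.
   Context: $C(K)$ is the real Banach space of continuous functions $K\to\mathbb{R}$ with the sup norm. A real Banach space $X$ has the ball fixed point property (BFPP) if every nonexpansive map $T\colon B_X\to B_X$ (i.e. $\|Tx-Ty\|\le\|x-y\|$) has a fixed point, where $B_X$ is the closed unit ball. *)

theory Defs
  imports "HOL-Analysis.Analysis"
begin

definition ball_fixed_point_property :: "'v::real_normed_vector itself \<Rightarrow> bool" where
  "ball_fixed_point_property _ \<longleftrightarrow>
     (\<forall>T :: 'v \<Rightarrow> 'v.
        (\<forall>x \<in> cball 0 1. T x \<in> cball 0 1) \<and>
        (\<forall>x \<in> cball 0 1. \<forall>y \<in> cball 0 1. norm (T x - T y) \<le> norm (x - y))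
        \<longrightarrow> (\<exists>x \<in> cball 0 1. T x = x))"

end

theory Submission
  imports Defs
begin

text \<open>Suppose a continuous \<open>h\<close> on a space \<open>X\<close> has a point \<open>p\<close> in the closure of both
  \<open>{h > 0}\<close> and \<open>{h < 0}\<close>. Then \<open>f \<mapsto> max (-1) (min 1 (f + h))\<close> is a nonexpansive
  self-map of the unit ball of \<open>C(X)\<close> without fixed points: a fixed point would equal \<open>1\<close>
  on \<open>{h > 0}\<close> and \<open>-1\<close> on \<open>{h < 0}\<close>, which continuity forbids at \<open>p\<close>.
  On \<open>K\<^sub>1 \<times> K\<^sub>2\<close> take \<open>h (x, y) = w\<^sub>1 x - w\<^sub>2 y\<close>, where \<open>w\<^sub>i \<ge> 0\<close> vanishes at some
  \<open>a\<^sub>i\<close> lying in the closure of \<open>{w\<^sub>i > 0}\<close>; such \<open>w\<^sub>i\<close> exist on every infinite compact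
  Hausdorff space, as a weighted sum \<open>\<Sum> 2\<^sup>-\<^sup>n \<phi>\<^sub>n\<close> of Urysohn functions supported in
  pairwise disjoint open sets \<open>U\<^sub>n\<close>, with \<open>a\<^sub>i\<close> a cluster point of points \<open>y\<^sub>n \<in> U\<^sub>n\<close>.\<close>

lemma Hausdorff_space_euclidean_t2: "Hausdorff_space (euclidean :: 'a::t2_space topology)"
  unfolding Hausdorff_space_def by (metis disjnt_def open_openin separation_t2)

lemma compact_t2_normal_space:
  assumes "compact (UNIV :: 'a::t2_space set)"
  shows "normal_space (euclidean :: 'a topology)"
proof (rule compact_Hausdorff_or_regular_imp_normal_space)
  show "compact_space (euclidean :: 'a topology)"
    using assms by (simp add: compact_space_def)
qed (simp add: Hausdorff_space_euclidean_t2)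

lemma compact_t2_bump_function:
  fixes U :: "'a::t2_space set"
  assumes "compact (UNIV :: 'a set)" and "open U" and "y \<in> U"
  obtains \<phi> :: "'a \<Rightarrow> real"
  where "continuous_on UNIV \<phi>" "\<And>x. \<phi> x \<in> {0..1}" "\<phi> y = 1" "\<And>x. x \<notin> U \<Longrightarrow> \<phi> x = 0"
proof -
  have "closedin euclidean (- U)" "closedin euclidean {y}"
    using assms(2) by (simp_all add: closed_Compl flip: closed_closedin)
  moreover have "disjnt (- U) {y}"
    using assms(3) by (simp add: disjnt_def)
  ultimately obtain \<phi> :: "'a \<Rightarrow> real" where \<phi>: "continuous_map euclidean (top_of_set {0..1}) \<phi>"
    "\<phi> ` (- U) \<subseteq> {0}" "\<phi> ` {y} \<subseteq> {1}"
    by (metis Urysohn_lemma[OF compact_t2_normal_space[OF assms(1)] _ _ _ zero_le_one])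
  have "continuous_on UNIV \<phi>" "\<phi> x \<in> {0..1}" for x
    using \<phi>(1) by (auto simp: continuous_map_in_subtopology)
  with \<phi>(2,3) show thesis
    by (intro that[of \<phi>]) auto
qed

lemma islimpt_split_neighbourhood:
  fixes a :: "'a::t2_space"
  assumes "a islimpt UNIV" and "open W" and "a \<in> W"
  obtains W' U y where "open W'" "a \<in> W'" "W' \<subseteq> W" "open U" "y \<in> U" "U \<subseteq> W" "U \<inter> W' = {}"
proof -
  obtain y where y: "y \<in> W" "y \<noteq> a"
    using islimptE[OF assms(1,3,2)] by blast
  then obtain U V where UV: "open U" "open V" "y \<in> U" "a \<in> V" "U \<inter> V = {}"
    using separation_t2[of y a] by blast
  show thesis
  proof (rule that[of "V \<inter> W" "U \<inter> W" y])
    show "open (V \<inter> W)" "open (U \<inter> W)"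
      using UV(1,2) assms(2) by (simp_all add: open_Int)
  qed (use UV y assms(3) in blast)+
qed

lemma islimpt_disjoint_open_sequence:
  fixes a :: "'a::t2_space"
  assumes "a islimpt UNIV"
  obtains U :: "nat \<Rightarrow> 'a set" and y where
    "\<And>n. open (U n)" "\<And>n. y n \<in> U n" "disjoint_family U"
proof -
  define admissible where "admissible t \<longleftrightarrow>
     open (fst t) \<and> a \<in> fst t \<and> open (fst (snd t)) \<and> snd (snd t) \<in> fst (snd t)
       \<and> fst (snd t) \<inter> fst t = {}" for t :: "'a set \<times> 'a set \<times> 'a"
  define refines where "refines t t' \<longleftrightarrow> fst t' \<subseteq> fst t \<and> fst (snd t') \<subseteq> fst t"
    for t t' :: "'a set \<times> 'a set \<times> 'a"
  have "\<exists>t. \<forall>n. admissible (t n) \<and> refines (t n) (t (Suc n))"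
  proof (rule dependent_nat_choice)
    obtain W U y where "open W" "a \<in> W" "open U" "y \<in> U" "U \<inter> W = {}"
      using islimpt_split_neighbourhood[OF assms open_UNIV UNIV_I] by metis
    then show "\<exists>t. admissible t"
      by (intro exI[of _ "(W, U, y)"]) (simp add: admissible_def)
  next
    fix t and n :: nat
    assume "admissible t"
    then obtain W U y where "open W" "a \<in> W" "W \<subseteq> fst t" "open U" "y \<in> U" "U \<subseteq> fst t"
      "U \<inter> W = {}"
      using islimpt_split_neighbourhood[OF assms] unfolding admissible_def by metis
    then show "\<exists>t'. admissible t' \<and> refines t t'"
      by (intro exI[of _ "(W, U, y)"]) (simp add: admissible_def refines_def)
  qed
  then obtain t where adm: "\<And>n. admissible (t n)" and ref: "\<And>n. refines (t n) (t (Suc n))"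
    by blast
  define W where "W n = fst (t n)" for n
  define U where "U n = fst (snd (t n))" for n
  define y where "y n = snd (snd (t n))" for n
  have U: "open (U n)" "y n \<in> U n" "U n \<inter> W n = {}" for n
    using adm[of n] by (simp_all add: admissible_def W_def U_def y_def)
  have W_decseq: "W n \<subseteq> W m" if "m \<le> n" for m n
    using that
  proof (induction n rule: dec_induct)
    case (step k)
    then show ?case
      using ref[of k] by (auto simp: refines_def W_def)
  qed simp
  have "U m \<inter> U n = {}" if "m < n" for m n
  proof -
    obtain k where k: "n = Suc k" "m \<le> k"
      using \<open>m < n\<close> by (cases n) auto
    then have "U n \<subseteq> W m"
      using ref[of k] W_decseq[OF k(2)] by (auto simp: refines_def W_def U_def)
    then show ?thesis
      using U(3)[of m] by blast
  qed
  then have "disjoint_family U"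
    unfolding disjoint_family_on_def by (metis Int_commute nat_neq_iff)
  with U show thesis
    using that by blast
qed

lemma continuous_on_geometric_weighted_suminf:
  fixes \<phi> :: "nat \<Rightarrow> 'a::topological_space \<Rightarrow> real"
  assumes "\<And>n. continuous_on S (\<phi> n)" and "\<And>n x. x \<in> S \<Longrightarrow> \<phi> n x \<in> {0..1}"
  shows "continuous_on S (\<lambda>x. \<Sum>n. (1/2)^n * \<phi> n x)"
proof (rule uniform_limit_theorem)
  show "\<forall>\<^sub>F n in sequentially. continuous_on S (\<lambda>x. \<Sum>i<n. (1/2::real)^i * \<phi> i x)"
    by (intro always_eventually allI continuous_intros assms(1))
  show "uniform_limit S (\<lambda>n x. \<Sum>i<n. (1/2::real)^i * \<phi> i x) (\<lambda>x. \<Sum>n. (1/2)^n * \<phi> n x)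
          sequentially"
    by (rule Weierstrass_m_test[of _ _ "\<lambda>n. (1/2)^n"])
       (use assms(2) in \<open>auto intro!: mult_left_le simp: abs_mult\<close>)
qed simp

lemma compact_t2_weighted_bump_sum:
  fixes U :: "nat \<Rightarrow> 'a::t2_space set"
  assumes "compact (UNIV :: 'a set)" and "\<And>n. open (U n)" and "\<And>n. y n \<in> U n"
  obtains w :: "'a \<Rightarrow> real"
  where "continuous_on UNIV w" "\<And>x. 0 \<le> w x" "\<And>n. 0 < w (y n)"
    "\<And>x. x \<notin> (\<Union>n. U n) \<Longrightarrow> w x = 0"
proof -
  have "\<exists>\<phi> :: 'a \<Rightarrow> real. continuous_on UNIV \<phi> \<and> (\<forall>x. \<phi> x \<in> {0..1}) \<and> \<phi> (y n) = 1
          \<and> (\<forall>x. x \<notin> U n \<longrightarrow> \<phi> x = 0)" for n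
    by (rule compact_t2_bump_function[OF assms(1) assms(2,3)[of n]]) blast
  then obtain \<phi> :: "nat \<Rightarrow> 'a \<Rightarrow> real" where
    \<phi>: "\<And>n. continuous_on UNIV (\<phi> n)" "\<And>n x. \<phi> n x \<in> {0..1}" "\<And>n. \<phi> n (y n) = 1"
      "\<And>n x. x \<notin> U n \<Longrightarrow> \<phi> n x = 0"
    by metis
  define w where "w x = (\<Sum>n. (1/2)^n * \<phi> n x)" for x
  have summable: "summable (\<lambda>n. (1/2::real)^n * \<phi> n x)" for x
    by (rule summable_comparison_test[of _ "\<lambda>n. (1/2::real)^n"])
       (use \<phi>(2) in \<open>auto intro!: mult_left_le simp: abs_mult\<close>)
  show thesis
  proof
    show "continuous_on UNIV w"
      unfolding w_def by (rule continuous_on_geometric_weighted_suminf[OF \<phi>(1,2)])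
    show "0 \<le> w x" for x
      unfolding w_def using \<phi>(2) by (intro suminf_nonneg summable) simp
    show "w x = 0" if "x \<notin> (\<Union>n. U n)" for x
      unfolding w_def using \<phi>(4) that by simp
    show "0 < w (y n)" for n
    proof -
      have "(\<Sum>i\<in>{n}. (1/2::real)^i * \<phi> i (y n)) \<le> w (y n)"
        unfolding w_def using \<phi>(2) by (intro sum_le_suminf summable) auto
      then have "(1/2::real)^n \<le> w (y n)"
        using \<phi>(3)[of n] by simp
      moreover have "0 < (1/2::real)^n"
        by simp
      ultimately show ?thesis
        by linarith
    qed
  qed
qed

lemma islimpt_range_disjoint_family_notin_Union:
  fixes y :: "'i \<Rightarrow> 'a::t1_space"
  assumes "a islimpt range y" and "\<And>n. open (U n)" and "\<And>n. y n \<in> U n"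
    and "disjoint_family U"
  shows "a \<notin> (\<Union>n. U n)"
proof
  assume "a \<in> (\<Union>n. U n)"
  then obtain n where "a \<in> U n"
    by blast
  then have "infinite (U n \<inter> range y)"
    using assms(1) assms(2)[of n] unfolding islimpt_eq_acc_point by blast
  moreover have "U n \<inter> range y \<subseteq> {y n}"
  proof
    fix x
    assume "x \<in> U n \<inter> range y"
    then obtain m where "x = y m" "y m \<in> U n"
      by blast
    then have "m = n"
      using assms(3)[of m] disjoint_family_onD[OF assms(4), of m n] by blast
    then show "x \<in> {y n}"
      using \<open>x = y m\<close> by simp
  qed
  ultimately show False
    using finite_subset by blast
qed

lemma infinite_compact_t2_zero_in_closure_of_cozero:
  assumes "compact (UNIV :: 'a::t2_space set)" and "infinite (UNIV :: 'a set)"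
  obtains w :: "'a::t2_space \<Rightarrow> real" and a
  where "continuous_on UNIV w" "\<And>x. 0 \<le> w x" "w a = 0" "a \<in> closure {x. 0 < w x}"
proof -
  obtain c :: 'a where "c islimpt UNIV"
    using Heine_Borel_imp_Bolzano_Weierstrass[OF assms] by blast
  then obtain U :: "nat \<Rightarrow> 'a set" and y where
    U: "\<And>n. open (U n)" "\<And>n. y n \<in> U n" "disjoint_family U"
    by (metis islimpt_disjoint_open_sequence)
  obtain w :: "'a \<Rightarrow> real" where w: "continuous_on UNIV w" "\<And>x. 0 \<le> w x" "\<And>n. 0 < w (y n)"
    "\<And>x. x \<notin> (\<Union>n. U n) \<Longrightarrow> w x = 0"
    using compact_t2_weighted_bump_sum[of U y, OF assms(1) U(1,2)] by blast
  have "inj y"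
    by (rule injI) (metis U(2) disjoint_family_onD[OF U(3)] UNIV_I disjoint_iff)
  then have "infinite (range y)"
    using finite_imageD infinite_UNIV_nat by blast
  then obtain a where a: "a islimpt range y"
    using Heine_Borel_imp_Bolzano_Weierstrass[OF assms(1)] by blast
  have "w a = 0"
    using w(4) islimpt_range_disjoint_family_notin_Union[OF a U] by blast
  moreover have "a islimpt {x. 0 < w x}"
    by (rule islimpt_subset[OF a]) (use w(3) in auto)
  then have "a \<in> closure {x. 0 < w x}"
    by (simp add: closure_def)
  ultimately show thesis
    using that w(1,2) by blast
qed

definition clip_shift :: "('c::topological_space \<Rightarrow> real) \<Rightarrow> ('c \<Rightarrow>\<^sub>C real) \<Rightarrow> ('c \<Rightarrow>\<^sub>C real)"
  where "clip_shift h f = Bcontfun (\<lambda>p. max (-1) (min 1 (f p + h p)))"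

lemma apply_clip_shift:
  assumes "continuous_on UNIV h"
  shows "apply_bcontfun (clip_shift h f) p = max (-1) (min 1 (f p + h p))"
proof -
  have "(\<lambda>p. max (-1) (min 1 (f p + h p))) \<in> bcontfun"
    by (rule bcontfun_normI[where b=1]) (auto intro!: continuous_intros assms)
  then show ?thesis
    by (simp add: clip_shift_def Bcontfun_inverse)
qed

lemma norm_clip_shift_le:
  assumes "continuous_on UNIV h"
  shows "norm (clip_shift h f) \<le> 1"
  by (rule norm_bound) (auto simp: apply_clip_shift[OF assms])

lemma norm_clip_shift_diff_le:
  assumes "continuous_on UNIV h"
  shows "norm (clip_shift h f - clip_shift h g) \<le> norm (f - g)"
proof (rule norm_bound)
  fix p
  have "norm (apply_bcontfun (clip_shift h f - clip_shift h g) p) \<le> \<bar>f p - g p\<bar>"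
    by (simp add: apply_clip_shift[OF assms])
  also have "\<dots> \<le> norm (f - g)"
    using norm_bounded[of "f - g" p] by simp
  finally show "norm (apply_bcontfun (clip_shift h f - clip_shift h g) p) \<le> norm (f - g)" .
qed

lemma fixed_point_clip_shift:
  assumes "continuous_on UNIV h" and "clip_shift h f = f" and "norm f \<le> 1"
  shows "0 < h p \<Longrightarrow> f p = 1" and "h p < 0 \<Longrightarrow> f p = -1"
proof -
  have "\<bar>f p\<bar> \<le> 1"
    using norm_bounded[of f p] assms(3) by simp
  moreover have "max (-1) (min 1 (f p + h p)) = f p"
    using apply_clip_shift[OF assms(1), of f p] assms(2) by simp
  ultimately show "0 < h p \<Longrightarrow> f p = 1" and "h p < 0 \<Longrightarrow> f p = -1"
    by (auto simp: max_def min_def split: if_splits)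
qed

lemma not_ball_fixed_point_property_bcontfun:
  fixes h :: "'c::topological_space \<Rightarrow> real"
  assumes "continuous_on UNIV h"
    and "p \<in> closure {q. 0 < h q}" and "p \<in> closure {q. h q < 0}"
  shows "\<not> ball_fixed_point_property TYPE('c \<Rightarrow>\<^sub>C real)"
proof
  assume "ball_fixed_point_property TYPE('c \<Rightarrow>\<^sub>C real)"
  moreover have "\<forall>f \<in> cball 0 1. clip_shift h f \<in> cball 0 1"
    by (simp add: norm_clip_shift_le[OF assms(1)])
  moreover have "\<forall>f \<in> cball 0 1. \<forall>g \<in> cball 0 1.
      norm (clip_shift h f - clip_shift h g) \<le> norm (f - g)"
    by (simp add: norm_clip_shift_diff_le[OF assms(1)])
  ultimately obtain f where f: "norm f \<le> 1" "clip_shift h f = f"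
    unfolding ball_fixed_point_property_def by (metis mem_cball_0)
  have "closed {q. f q = c}" for c
    by (intro closed_Collect_eq continuous_intros) simp
  moreover have "{q. 0 < h q} \<subseteq> {q. f q = 1}" "{q. h q < 0} \<subseteq> {q. f q = -1}"
    using fixed_point_clip_shift[OF assms(1) f(2,1)] by auto
  ultimately have "f p = 1" "f p = -1"
    using assms(2,3) closure_minimal by blast+
  then show False
    by simp
qed

theorem mainTheorem4:
  assumes "compact (UNIV :: 'a::t2_space set)" and "infinite (UNIV :: 'a set)"
    and "compact (UNIV :: 'b::t2_space set)" and "infinite (UNIV :: 'b set)"
  shows "\<not> ball_fixed_point_property TYPE(('a \<times> 'b) \<Rightarrow>\<^sub>C real)"
proof -
  obtain w\<^sub>1 :: "'a \<Rightarrow> real" and a where w\<^sub>1: "continuous_on UNIV w\<^sub>1" "\<And>x. 0 \<le> w\<^sub>1 x"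
    "w\<^sub>1 a = 0" "a \<in> closure {x. 0 < w\<^sub>1 x}"
    using infinite_compact_t2_zero_in_closure_of_cozero[OF assms(1,2)] by metis
  obtain w\<^sub>2 :: "'b \<Rightarrow> real" and b where w\<^sub>2: "continuous_on UNIV w\<^sub>2" "\<And>x. 0 \<le> w\<^sub>2 x"
    "w\<^sub>2 b = 0" "b \<in> closure {x. 0 < w\<^sub>2 x}"
    using infinite_compact_t2_zero_in_closure_of_cozero[OF assms(3,4)] by metis
  define h where "h p = w\<^sub>1 (fst p) - w\<^sub>2 (snd p)" for p :: "'a \<times> 'b"
  have "continuous_on UNIV h"
    unfolding h_def
    using continuous_on_compose2[OF w\<^sub>1(1) continuous_on_fst[OF continuous_on_id]]
      continuous_on_compose2[OF w\<^sub>2(1) continuous_on_snd[OF continuous_on_id]]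
    by (intro continuous_on_diff) simp_all
  moreover have "closure ({x. 0 < w\<^sub>1 x} \<times> {b}) \<subseteq> closure {p. 0 < h p}"
    using w\<^sub>2(3) by (intro closure_mono) (auto simp: h_def)
  then have "(a, b) \<in> closure {p. 0 < h p}"
    using w\<^sub>1(4) by (auto simp: closure_Times)
  moreover have "closure ({a} \<times> {y. 0 < w\<^sub>2 y}) \<subseteq> closure {p. h p < 0}"
    using w\<^sub>1(3) by (intro closure_mono) (auto simp: h_def)
  then have "(a, b) \<in> closure {p. h p < 0}"
    using w\<^sub>2(4) by (auto simp: closure_Times)
  ultimately show ?thesis
    by (rule not_ball_fixed_point_property_bcontfun)
qed

end
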